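(* Let $a\ge 0$ be an integer and $\mathbf{t}=2^a(1+\mathbf{i})$. Then in $H_{1,2,2}$ the left ideal $H_{1,2,2}\,\mathbf{t}$, the right ideal $\mathbf{t}\,H_{1,2,2}$, and the two-sided ideal generated by $\mathbf{t}$ are all the same set.
   Context: Let $\mathbf{i},\mathbf{j},\mathbf{k}$ be the standard quaternion units. $H_{1,2,2}$ is the subring of the quaternions equal to the $\mathbb{Z}$-module generated by $\mathbf{v}_1=1$, $\mathbf{v}_2=\mathbf{i}$, $\mathbf{v}_3=\tfrac12(1+\mathbf{i}+\sqrt2\,\mathbf{j})$, $\mathbf{v}_4=\tfrac12(1+\mathbf{i}+\sqrt2\,\mathbf{k})$. *)

theory Defs
  imports Complex_Main
begin

datatype quat = Quat (qre: real) (qi: real) (qj: real) (qk: real)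

instantiation quat :: ring_1
begin
definition "0 = Quat 0 0 0 0"
definition "1 = Quat 1 0 0 0"
definition "x + y = Quat (qre x + qre y) (qi x + qi y) (qj x + qj y) (qk x + qk y)"
definition "x - y = Quat (qre x - qre y) (qi x - qi y) (qj x - qj y) (qk x - qk y)"
definition "- x = Quat (- qre x) (- qi x) (- qj x) (- qk x)"
definition "x * y = Quat
   (qre x * qre y - qi x * qi y - qj x * qj y - qk x * qk y)
   (qre x * qi y + qi x * qre y + qj x * qk y - qk x * qj y)
   (qre x * qj y - qi x * qk y + qj x * qre y + qk x * qi y)
   (qre x * qk y + qi x * qj y - qj x * qi y + qk x * qre y)"
instance
  by standard (simp_all add: zero_quat_def one_quat_def plus_quat_def minus_quat_def
      uminus_quat_def times_quat_def algebra_simps quat.expand)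
end

definition qI :: quat where "qI = Quat 0 1 0 0"
definition qJ :: quat where "qJ = Quat 0 0 1 0"
definition qK :: quat where "qK = Quat 0 0 0 1"

definition qreal :: "real \<Rightarrow> quat" where "qreal r = Quat r 0 0 0"

definition v1 :: quat where "v1 = 1"
definition v2 :: quat where "v2 = qI"
definition v3 :: quat where "v3 = qreal (1/2) * (1 + qI + qreal (sqrt 2) * qJ)"
definition v4 :: quat where "v4 = qreal (1/2) * (1 + qI + qreal (sqrt 2) * qK)"

definition H122 :: "quat set" where
  "H122 = {of_int a * v1 + of_int b * v2 + of_int c * v3 + of_int d * v4 | a b c d :: int. True}"

inductive_set two_sided_ideal :: "quat set \<Rightarrow> quat \<Rightarrow> quat set" for R t where
  zero: "0 \<in> two_sided_ideal R t"
| gen: "x \<in> R \<Longrightarrow> y \<in> R \<Longrightarrow> x * t * y \<in> two_sided_ideal R t"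
| add: "u \<in> two_sided_ideal R t \<Longrightarrow> w \<in> two_sided_ideal R t \<Longrightarrow> u + w \<in> two_sided_ideal R t"

end

theory Submission
  imports Defs
begin

text \<open>The element 1 + i normalises H_{1,2,2}: in the coordinates with respect to v1, ..., v4,
  x (1 + i) = (1 + i) x' where x' arises from x by an integral change of coordinates, and conversely.
  The real factor 2^a is central, so H_{1,2,2} t = t H_{1,2,2}. A principal right ideal that is also
  a left ideal absorbs every product x t y, hence it is the two-sided ideal.\<close>

lemma two_sided_ideal_eq_right_multiples:
  assumes "0 \<in> R" and one: "1 \<in> R"
    and add_closed: "\<And>x y. x \<in> R \<Longrightarrow> y \<in> R \<Longrightarrow> x + y \<in> R"
    and mult_closed: "\<And>x y. x \<in> R \<Longrightarrow> y \<in> R \<Longrightarrow> x * y \<in> R"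
    and normal: "(\<lambda>x. x * t) ` R = (\<lambda>x. t * x) ` R"
  shows "two_sided_ideal R t = (\<lambda>x. x * t) ` R"
proof
  show "two_sided_ideal R t \<subseteq> (\<lambda>x. x * t) ` R"
  proof
    fix u assume "u \<in> two_sided_ideal R t"
    then show "u \<in> (\<lambda>x. x * t) ` R"
    proof induction
      case zero
      show ?case using \<open>0 \<in> R\<close> by force
    next
      case (gen x y)
      obtain y' where "y' \<in> R" and "t * y = y' * t"
        using normal gen(2) by (metis (no_types, lifting) image_iff image_eqI)
      then have "x * t * y = (x * y') * t" by (simp add: mult.assoc)
      then show ?case using mult_closed[OF gen(1) \<open>y' \<in> R\<close>] by blast
    next
      case (add u w)
      then obtain u' w' where "u' \<in> R" "w' \<in> R" "u = u' * t" "w = w' * t" by blast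
      then have "u + w = (u' + w') * t" by (simp add: distrib_right)
      then show ?case using add_closed[OF \<open>u' \<in> R\<close> \<open>w' \<in> R\<close>] by blast
    qed
  qed
  show "(\<lambda>x. x * t) ` R \<subseteq> two_sided_ideal R t"
    using two_sided_ideal.gen[OF _ one] by force
qed

lemma right_eq_left_multiples_scale_central:
  fixes c u :: "'a :: semigroup_mult"
  assumes central: "\<And>x. c * x = x * c"
    and normal: "(\<lambda>x. x * u) ` R = (\<lambda>x. u * x) ` R"
  shows "(\<lambda>x. x * (c * u)) ` R = (\<lambda>x. (c * u) * x) ` R"
proof -
  have "(\<lambda>x. x * (c * u)) ` R = (*) c ` (\<lambda>x. x * u) ` R"
    by (auto simp: image_image central mult.assoc[symmetric])
  also have "\<dots> = (\<lambda>x. (c * u) * x) ` R"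
    unfolding normal by (auto simp: image_image mult.assoc)
  finally show ?thesis .
qed

lemma qreal_mult_commute: "qreal r * x = x * qreal r"
  by (simp add: qreal_def times_quat_def)

lemma of_int_quat: "(of_int n :: quat) = qreal (of_int n)"
proof -
  have of_nat: "(of_nat m :: quat) = qreal (of_nat m)" for m
    by (induction m) (simp_all add: qreal_def zero_quat_def one_quat_def plus_quat_def)
  show ?thesis
    by (cases n rule: int_cases)
      (simp_all add: of_nat qreal_def uminus_quat_def minus_quat_def plus_quat_def one_quat_def)
qed

definition vcomb :: "real \<Rightarrow> real \<Rightarrow> real \<Rightarrow> real \<Rightarrow> quat" where
  "vcomb a b c d = Quat (a + c/2 + d/2) (b + c/2 + d/2) (c * sqrt 2 / 2) (d * sqrt 2 / 2)"

lemma basis_comb_eq_vcomb: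
  "qreal a * v1 + qreal b * v2 + qreal c * v3 + qreal d * v4 = vcomb a b c d"
  by (simp add: v1_def v2_def v3_def v4_def vcomb_def qreal_def qI_def qJ_def qK_def
      one_quat_def plus_quat_def times_quat_def field_simps)

lemma H122_eq_vcomb_image: "H122 = {vcomb (of_int a) (of_int b) (of_int c) (of_int d) | a b c d. True}"
  unfolding H122_def of_int_quat basis_comb_eq_vcomb ..

lemma vcomb_in_H122: "vcomb (of_int a) (of_int b) (of_int c) (of_int d) \<in> H122"
  unfolding H122_eq_vcomb_image by blast

lemma H122E:
  assumes "x \<in> H122"
  obtains a b c d :: int where "x = vcomb a b c d"
  using assms unfolding H122_eq_vcomb_image by blast

lemma vcomb_add: "vcomb a b c d + vcomb e f g h = vcomb (a + e) (b + f) (c + g) (d + h)"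
  by (simp add: vcomb_def plus_quat_def field_simps)

lemma vcomb_mult: "vcomb a b c d * vcomb e f g h = vcomb
    (a*e - b*f - b*g - c*g - d*f - d*g - d*h)
    (a*f + b*e + b*h + c*f + c*h - d*g)
    (a*g - b*h + c*e + c*g + d*f + d*g)
    (a*h + b*g - c*f + d*e + d*g + d*h)"
proof -
  have sqrt2: "sqrt 2 * (sqrt 2 * x) = 2 * x" for x :: real
    by (simp flip: mult.assoc)
  show ?thesis
    unfolding vcomb_def times_quat_def quat.sel quat.inject
    by (intro conjI) (simp_all add: field_simps sqrt2)
qed

lemma vcomb_mult_one_plus_i: "vcomb a b c d * (1 + qI) = (1 + qI) * vcomb (a + c) (b + c) d (- c)"
  by (simp add: vcomb_def qI_def one_quat_def plus_quat_def times_quat_def field_simps)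

lemma one_plus_i_mult_vcomb: "(1 + qI) * vcomb a b c d = vcomb (a + d) (b + d) (- d) c * (1 + qI)"
  by (simp add: vcomb_def qI_def one_quat_def plus_quat_def times_quat_def field_simps)

lemma zero_in_H122: "0 \<in> H122"
  using vcomb_in_H122[of 0 0 0 0] by (simp add: vcomb_def zero_quat_def)

lemma one_in_H122: "1 \<in> H122"
  using vcomb_in_H122[of 1 0 0 0] by (simp add: vcomb_def one_quat_def)

lemma H122_add_closed:
  assumes "x \<in> H122" and "y \<in> H122"
  shows "x + y \<in> H122"
proof -
  obtain a b c d :: int where x: "x = vcomb a b c d" using assms(1) by (rule H122E)
  obtain e f g h :: int where y: "y = vcomb e f g h" using assms(2) by (rule H122E)
  have "x + y = vcomb (of_int (a + e)) (of_int (b + f)) (of_int (c + g)) (of_int (d + h))"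
    unfolding x y vcomb_add by (simp only: of_int_add)
  then show ?thesis by (simp only: vcomb_in_H122)
qed

lemma H122_mult_closed:
  assumes "x \<in> H122" and "y \<in> H122"
  shows "x * y \<in> H122"
proof -
  obtain a b c d :: int where x: "x = vcomb a b c d" using assms(1) by (rule H122E)
  obtain e f g h :: int where y: "y = vcomb e f g h" using assms(2) by (rule H122E)
  have "x * y = vcomb (of_int (a*e - b*f - b*g - c*g - d*f - d*g - d*h))
      (of_int (a*f + b*e + b*h + c*f + c*h - d*g))
      (of_int (a*g - b*h + c*e + c*g + d*f + d*g))
      (of_int (a*h + b*g - c*f + d*e + d*g + d*h))"
    unfolding x y vcomb_mult by (simp only: of_int_mult of_int_add of_int_diff)
  then show ?thesis by (simp only: vcomb_in_H122)
qed

lemma H122_right_eq_left_multiples_one_plus_i: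
  "(\<lambda>x. x * (1 + qI)) ` H122 = (\<lambda>x. (1 + qI) * x) ` H122"
proof (intro equalityI image_subsetI)
  fix x assume "x \<in> H122"
  then obtain a b c d :: int where x: "x = vcomb a b c d" by (rule H122E)
  show "x * (1 + qI) \<in> (\<lambda>x. (1 + qI) * x) ` H122"
    using vcomb_in_H122[of "a + c" "b + c" d "- c"] by (simp add: x vcomb_mult_one_plus_i)
  show "(1 + qI) * x \<in> (\<lambda>x. x * (1 + qI)) ` H122"
    using vcomb_in_H122[of "a + d" "b + d" "- d" c] by (simp add: x one_plus_i_mult_vcomb)
qed

theorem lemma10:
  fixes a :: nat
  defines "t \<equiv> qreal (2 ^ a) * (1 + qI)"
  shows "(\<lambda>x. x * t) ` H122 = (\<lambda>x. t * x) ` H122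
       \<and> (\<lambda>x. t * x) ` H122 = two_sided_ideal H122 t"
proof -
  have normal: "(\<lambda>x. x * t) ` H122 = (\<lambda>x. t * x) ` H122"
    unfolding t_def
    by (rule right_eq_left_multiples_scale_central[OF qreal_mult_commute
          H122_right_eq_left_multiples_one_plus_i])
  have "two_sided_ideal H122 t = (\<lambda>x. x * t) ` H122"
    by (rule two_sided_ideal_eq_right_multiples[OF zero_in_H122 one_in_H122
          H122_add_closed H122_mult_closed normal])
  with normal show ?thesis by simp
qed

end
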